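(* Let $n\ge 2$ and let $\mathsf u$ be a subword of $\bm\lambda_n$ with $u_1u_2\cdots u_{n(n-1)}=e$. Then for every integer $k$ and all integers $a,b$ with $0\le b-a<n(n-1)$, $$\big|(u_au_{a+1}\cdots u_b)(k)-k\big|\le n-2,$$ where indices of $\mathsf u$ are taken modulo $n(n-1)$ (i.e. $u_i:=u_{i'}$ with $1\le i'\le n(n-1)$, $i'\equiv i\pmod{n(n-1)}$).
   Context: $\widetilde S_n$ is the group, under composition, of bijections $w:\mathbb Z\to\mathbb Z$ with $w(i+n)=w(i)+n$ and $\sum_{i=1}^n w(i)=\binom{n+1}2$; $s_i=(\!(i,i+1)\!)$ for $i\in\{0,\dots,n-1\}$, where $(\!(i,j)\!)$ swaps $i+kn$ and $j+kn$ for all $k\in\mathbb Z$. $\bm\lambda_n$ is the word $[s_0,\dots,s_{n-1}]$ repeated $n-1$ times, with $j$-th letter $\sigma_j=s_{(j-1)\bmod n}$ (index in $\{0,\dots,n-1\}$). A subword is $\mathsf u=[u_1,\dots,u_{n(n-1)}]$ with each $u_j\in\{\sigma_j,e\}$. *)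

theory Defs
  imports Main
begin

text \<open>Affine transposition ((i,j)): swaps i+kn and j+kn for all integers k
  (meant for i, j distinct mod n).\<close>
definition aff_transp :: "nat \<Rightarrow> int \<Rightarrow> int \<Rightarrow> int \<Rightarrow> int" where
  "aff_transp n i j x =
     (if x mod int n = i mod int n then x + (j - i)
      else if x mod int n = j mod int n then x - (j - i)
      else x)"

definition s_refl :: "nat \<Rightarrow> nat \<Rightarrow> int \<Rightarrow> int" where
  "s_refl n i = aff_transp n (int i) (int i + 1)"

definition lam_letter :: "nat \<Rightarrow> nat \<Rightarrow> int \<Rightarrow> int" where
  "lam_letter n j = s_refl n ((j - 1) mod n)"

definition is_subword :: "nat \<Rightarrow> (nat \<Rightarrow> int \<Rightarrow> int) \<Rightarrow> bool" where
  "is_subword n u \<longleftrightarrow> (\<forall>j\<in>{1..n*(n-1)}. u j = lam_letter n j \<or> u j = id)"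

definition cyc_letter :: "nat \<Rightarrow> (nat \<Rightarrow> int \<Rightarrow> int) \<Rightarrow> int \<Rightarrow> int \<Rightarrow> int" where
  "cyc_letter n u i = u (nat ((i - 1) mod int (n*(n-1))) + 1)"

text \<open>Product u_a u_{a+1} ... u_b (composition; rightmost factor applied first).\<close>
definition word_prod :: "(int \<Rightarrow> int \<Rightarrow> int) \<Rightarrow> int \<Rightarrow> int \<Rightarrow> int \<Rightarrow> int" where
  "word_prod f a b = foldr (\<lambda>i g. f i \<circ> g) [a..b] id"

end

(*
  Read the letters from right to left, starting at position b: let x_s be the image of k under
  the last s letters and z_s = x_s + s.  The letter at position i is e or s_((i-1) mod n), so z
  is a nondecreasing walk that advances by 1 at each step, except that it jumps by 2 from values
  congruent to b - 1 and may stay put at values congruent to b (mod n).  As all letters are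
  involutions, every cyclic rotation of u_1 ... u_N (N = n(n-1)) is the identity too, whence
  z_(s+N) = z_s + N.  The displacement x can only rise at a jump, and a window of length at most
  N contains at most n - 1 jump values, so x rises by at most n - 1 there.  A rise of exactly
  n - 1 is impossible: the potential x - (number of jump values passed) never increases and drops
  strictly whenever z lands on a value congruent to b.  A full rise uses up all jump values of
  the period, so z does not pass any further jump value until the period ends; as x must fall
  back meanwhile, z stays at a value congruent to b, which can only be the value it landed on at
  the end of the window.  Applying the bound to the windows [0, L] and [L, N], where
  L = b - a + 1, gives both signs of the inequality.
*)
theory Submission
  imports Defs
begin

lemma mod_plus_one_eq_iff: "(x + 1) mod m = (y + 1) mod m \<longleftrightarrow> x mod m = y mod (m :: int)"
  by (simp add: mod_eq_dvd_iff)

lemma mod_plus_one_neq: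
  assumes "2 \<le> n"
  shows "(v + 1) mod int n \<noteq> v mod int n"
proof
  assume "(v + 1) mod int n = v mod int n"
  then have "int n dvd (v + 1) - v" by (simp only: mod_eq_dvd_iff)
  with assms show False by simp
qed

lemma div_plus_one_int:
  fixes a n :: int
  assumes "0 < n"
  shows "(a + 1) div n = a div n + (if (a + 1) mod n = 0 then 1 else 0)"
proof -
  define q r where "q = a div n" and "r = a mod n"
  have a: "a + 1 = n * q + (r + 1)" and r: "0 \<le> r" "r < n"
    using assms by (simp_all add: q_def r_def)
  show ?thesis
  proof (cases "r + 1 = n")
    case True
    then have "a + 1 = n * (q + 1)" using a by (simp add: algebra_simps)
    then show ?thesis using assms by (simp add: q_def)
  next
    case False
    then have "0 \<le> r + 1" "r + 1 < n" using r by simp_all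
    then have "(a + 1) div n = q" "(a + 1) mod n = r + 1" unfolding a by simp_all
    then show ?thesis using r by (simp add: q_def)
  qed
qed

lemma foldr_comp_eq:
  "foldr (\<lambda>i g. f i \<circ> g) xs h = foldr (\<lambda>i g. f i \<circ> g) xs id \<circ> h"
  by (induction xs) (simp_all add: comp_assoc)

lemma word_prod_empty [simp]: "b < a \<Longrightarrow> word_prod f a b = id"
  unfolding word_prod_def by simp

lemma word_prod_first: "a \<le> b \<Longrightarrow> word_prod f a b = f a \<circ> word_prod f (a + 1) b"
  unfolding word_prod_def by (simp add: upto_rec1)

lemma word_prod_split:
  assumes "a \<le> m" "m \<le> b + 1"
  shows "word_prod f a b = word_prod f a (m - 1) \<circ> word_prod f m b"
proof (cases "m = b + 1")
  case False
  then have "[a..b] = [a..m - 1] @ [m..b]" using assms by (intro upto_split1) simp_all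
  then show ?thesis unfolding word_prod_def by (simp add: foldr_comp_eq[of _ _ "foldr _ [m..b] id"])
qed simp

lemma word_prod_last: "a \<le> b \<Longrightarrow> word_prod f a b = word_prod f a (b - 1) \<circ> f b"
  using word_prod_split[of a b b f] by (simp add: word_prod_first)

lemma aff_transp_adjacent_involution:
  assumes "2 \<le> n"
  shows "aff_transp n r (r + 1) \<circ> aff_transp n r (r + 1) = id"
proof -
  have "aff_transp n r (r + 1) (aff_transp n r (r + 1) y) = y" for y
  proof -
    consider "y mod int n = r mod int n" | "y mod int n = (r + 1) mod int n"
      | "y mod int n \<noteq> r mod int n" "y mod int n \<noteq> (r + 1) mod int n"
      by blast
    then show ?thesis
    proof cases
      case 1
      then show ?thesis
        using mod_plus_one_neq[OF assms, of r] mod_plus_one_eq_iff[of y "int n" r]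
        unfolding aff_transp_def by simp
    next
      case 2
      then show ?thesis
        using mod_plus_one_neq[OF assms, of r] mod_plus_one_eq_iff[of "y - 1" "int n" r]
        unfolding aff_transp_def by simp
    qed (simp add: aff_transp_def)
  qed
  then show ?thesis by auto
qed

lemma cyc_letter_cases:
  assumes "2 \<le> n" and "is_subword n u"
  shows "cyc_letter n u i = id \<or>
    cyc_letter n u i = aff_transp n ((i - 1) mod int n) ((i - 1) mod int n + 1)"
proof -
  define N where "N = n * (n - 1)"
  define j where "j = nat ((i - 1) mod int N) + 1"
  have "0 < N" unfolding N_def using assms(1) by simp
  then have "nat ((i - 1) mod int N) < N" by (simp add: nat_less_iff)
  then have "j \<in> {1..N}" unfolding j_def by simp
  then have "u j = lam_letter n j \<or> u j = id" using assms(2) unfolding is_subword_def N_def by blast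
  moreover have "cyc_letter n u i = u j" unfolding cyc_letter_def j_def N_def ..
  moreover have "int ((j - 1) mod n) = (i - 1) mod int n"
    using \<open>0 < N\<close> by (simp add: j_def zmod_int N_def mod_mod_cancel)
  then have "lam_letter n j = aff_transp n ((i - 1) mod int n) ((i - 1) mod int n + 1)"
    unfolding lam_letter_def s_refl_def by simp
  ultimately show ?thesis by auto
qed

lemma cyc_letter_periodic: "cyc_letter n u (i + int (n * (n - 1))) = cyc_letter n u i"
  unfolding cyc_letter_def by (simp add: diff_add_eq[symmetric])

lemma cyc_letter_involution:
  assumes "2 \<le> n" and "is_subword n u"
  shows "cyc_letter n u i \<circ> cyc_letter n u i = id"
  using cyc_letter_cases[OF assms, of i] aff_transp_adjacent_involution[OF assms(1)] by auto

lemma word_prod_rotate: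
  assumes "0 < N" and "\<And>i. f (i + N) = f i" and "\<And>i. f i \<circ> f i = id"
  shows "word_prod f (j + 1) (j + N) = f j \<circ> word_prod f j (j + N - 1) \<circ> f j"
proof -
  have "word_prod f (j + 1) (j + N) = word_prod f (j + 1) (j + N - 1) \<circ> f j"
    using assms(1) assms(2)[of j] word_prod_last[of "j + 1" "j + N" f] by simp
  also have "word_prod f (j + 1) (j + N - 1) = f j \<circ> word_prod f j (j + N - 1)"
    using assms(1) word_prod_first[of j "j + N - 1" f] by (simp add: comp_assoc[symmetric] assms(3))
  finally show ?thesis .
qed

lemma involution_conj_eq_id:
  assumes "g \<circ> g = id"
  shows "g \<circ> h \<circ> g = id \<longleftrightarrow> h = id"
proof
  assume conj: "g \<circ> h \<circ> g = id"
  have "h = (g \<circ> g) \<circ> h \<circ> (g \<circ> g)" using assms by simp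
  also have "\<dots> = g \<circ> (g \<circ> h \<circ> g) \<circ> g" by (simp only: comp_assoc)
  finally show "h = id" using conj assms by simp
qed (use assms in simp)

lemma word_prod_rotation_id:
  assumes "0 < N" and "\<And>i. f (i + N) = f i" and "\<And>i. f i \<circ> f i = id"
    and "word_prod f 1 N = id"
  shows "word_prod f j (j + N - 1) = id"
proof (induction j rule: int_induct[where k = 1])
  case base
  then show ?case using assms(4) by simp
next
  case (step1 i)
  have "word_prod f (i + 1) (i + 1 + N - 1) = f i \<circ> word_prod f i (i + N - 1) \<circ> f i"
    using word_prod_rotate[where f = f and N = N, OF assms(1-3), of i] by (simp add: add_ac)
  then show ?case using step1(2) by (simp only: involution_conj_eq_id[OF assms(3)])
next
  case (step2 i)
  have "word_prod f i (i + N - 1) = f (i - 1) \<circ> word_prod f (i - 1) (i - 1 + N - 1) \<circ> f (i - 1)"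
    using word_prod_rotate[where f = f and N = N, OF assms(1-3), of "i - 1"] by (simp add: diff_add_eq)
  then show ?case using step2(2) involution_conj_eq_id[OF assms(3)] by metis
qed

(* Up to an additive constant, the number of integers below v that are congruent to c mod n. *)
definition level :: "nat \<Rightarrow> int \<Rightarrow> int \<Rightarrow> int" where
  "level n c v = (v - c - 1) div int n"

lemma level_plus_one:
  assumes "0 < n"
  shows "level n c (v + 1) = level n c v + (if v mod int n = c mod int n then 1 else 0)"
proof -
  have "(v - c) mod int n = 0 \<longleftrightarrow> v mod int n = c mod int n"
    by (simp add: mod_eq_dvd_iff dvd_eq_mod_eq_0[symmetric])
  then show ?thesis
    using div_plus_one_int[of "int n" "v - c - 1"] assms by (simp add: level_def)
qed

lemma level_mono: "0 < n \<Longrightarrow> v \<le> w \<Longrightarrow> level n c v \<le> level n c w"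
  unfolding level_def by (simp add: zdiv_mono1)

lemma level_add_mult:
  assumes "0 < n"
  shows "level n c (v + int n * m) = level n c v + m"
proof -
  have shift: "v + int n * m - c - 1 = (v - c - 1) + m * int n" by simp
  show ?thesis unfolding level_def shift using assms by simp
qed

lemma eq_if_level_eq:
  assumes "0 < n" and "w mod int n = (c + 1) mod int n" and "v \<le> w"
    and "level n c v = level n c w"
  shows "v = w"
proof (rule ccontr)
  assume "v \<noteq> w"
  have "(w - 1) mod int n = c mod int n"
    using assms(2) mod_plus_one_eq_iff[of "w - 1" "int n" c] by simp
  then have "level n c w = level n c (w - 1) + 1"
    using level_plus_one[OF assms(1), of c "w - 1"] by simp
  moreover have "level n c v \<le> level n c (w - 1)"
    using assms(1,3) \<open>v \<noteq> w\<close> by (intro level_mono) simp_all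
  ultimately show False using assms(4) by simp
qed

definition walk_step :: "nat \<Rightarrow> int \<Rightarrow> int \<Rightarrow> int \<Rightarrow> bool" where
  "walk_step n c v w \<longleftrightarrow>
     w = v + 1 \<or> (w = v + 2 \<and> v mod int n = c mod int n) \<or>
     (w = v \<and> v mod int n = (c + 1) mod int n)"

lemma walk_step_adjacent_transp:
  assumes "g = id \<or> g = aff_transp n r (r + 1)"
  shows "walk_step n r y (g y + 1)"
proof -
  have "aff_transp n r (r + 1) y + 1 = y + 2 \<and> y mod int n = r mod int n \<or>
      aff_transp n r (r + 1) y + 1 = y \<and> y mod int n = (r + 1) mod int n \<or>
      aff_transp n r (r + 1) y + 1 = y + 1"
    unfolding aff_transp_def by simp
  then show ?thesis using assms unfolding walk_step_def by auto
qed

lemma walk_step_shift: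
  assumes "walk_step n c v w" and "c' mod int n = (c + d) mod int n"
  shows "walk_step n c' (v + d) (w + d)"
proof -
  have "(v + d) mod int n = (c' + e) mod int n" if "v mod int n = (c + e) mod int n" for e
  proof -
    have "int n dvd (v - (c + e)) - (c' - (c + d))"
      using that assms(2) by (rule_tac dvd_diff) (simp_all add: mod_eq_dvd_iff)
    then show ?thesis by (simp add: mod_eq_dvd_iff algebra_simps)
  qed
  from this[of 0] this[of 1] show ?thesis using assms(1) unfolding walk_step_def by auto
qed

lemma walk_step_ge: "walk_step n c v w \<Longrightarrow> v \<le> w"
  unfolding walk_step_def by auto

lemma walk_step_stay: "walk_step n c v v \<Longrightarrow> v mod int n = (c + 1) mod int n"
  unfolding walk_step_def by auto

lemma walk_step_level:
  assumes "2 \<le> n" and "walk_step n c v w"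
  shows "w - level n c w \<le> v + 1 - level n c v"
    and "w mod int n = (c + 1) mod int n \<Longrightarrow> w - level n c w < v + 1 - level n c v"
proof -
  have n: "0 < n" using assms(1) by simp
  consider "w = v + 1" | "w = v + 2" "v mod int n = c mod int n"
    | "w = v" "v mod int n = (c + 1) mod int n"
    using assms(2) unfolding walk_step_def by blast
  then have "w - level n c w \<le> v + 1 - level n c v \<and>
      (w mod int n = (c + 1) mod int n \<longrightarrow> w - level n c w < v + 1 - level n c v)"
  proof cases
    case 1
    then show ?thesis using level_plus_one[OF n, of c v] by (auto simp: mod_plus_one_eq_iff)
  next
    case 2
    have "(v + 1) mod int n \<noteq> c mod int n" using 2(2) mod_plus_one_neq[OF assms(1), of v] by metis
    then have "level n c w = level n c v + 1" and "w mod int n \<noteq> (c + 1) mod int n"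
      using 2 level_plus_one[OF n, of c v] level_plus_one[OF n, of c "v + 1"]
        mod_plus_one_eq_iff[of "v + 1" "int n" c]
      by (simp_all add: add.assoc)
    then show ?thesis using 2 by simp
  next
    case 3
    then show ?thesis by simp
  qed
  then show "w - level n c w \<le> v + 1 - level n c v"
    and "w mod int n = (c + 1) mod int n \<Longrightarrow> w - level n c w < v + 1 - level n c v"
    by simp_all
qed

locale periodic_walk =
  fixes n :: nat and c :: int and z :: "nat \<Rightarrow> int"
  assumes two_le_n: "2 \<le> n"
    and walk: "\<And>t. walk_step n c (z t) (z (Suc t))"
    and periodic: "\<And>t. z (t + n * (n - 1)) = z t + int (n * (n - 1))"
begin

definition potential :: "nat \<Rightarrow> int" where
  "potential t = z t - int t - level n c (z t)"

lemma z_mono: "t \<le> t' \<Longrightarrow> z t \<le> z t'"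
  by (rule lift_Suc_mono_le) (rule walk_step_ge[OF walk])

lemma potential_antimono: "t \<le> t' \<Longrightarrow> potential t' \<le> potential t"
proof (rule lift_Suc_antimono_le)
  show "potential (Suc s) \<le> potential s" for s
    using walk_step_level(1)[OF two_le_n walk[of s]] unfolding potential_def by simp
qed

lemma potential_strict:
  assumes "t < t'" and "z t' mod int n = (c + 1) mod int n"
  shows "potential t' < potential t"
proof -
  obtain p where p: "t' = Suc p" "t \<le> p" using assms(1) by (cases t') auto
  have "potential t' < potential p"
    using walk_step_level(2)[OF two_le_n walk[of p]] assms(2) p(1) unfolding potential_def by simp
  also have "\<dots> \<le> potential t" using potential_antimono p(2) .
  finally show ?thesis .
qed

lemma level_periodic: "level n c (z (t + n * (n - 1))) = level n c (z t) + int (n - 1)"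
proof -
  have "z (t + n * (n - 1)) = z t + int n * int (n - 1)" using periodic[of t] by simp
  then show ?thesis using level_add_mult[of n c "z t" "int (n - 1)"] two_le_n by simp
qed

lemma stay_if_displacement_drops:
  assumes "t \<le> t'" and "z t' - int t' < z t - int t"
  shows "\<exists>p. t \<le> p \<and> p < t' \<and> z (Suc p) = z p"
  using assms
proof (induction t' rule: dec_induct)
  case (step q)
  show ?case
  proof (cases "z (Suc q) = z q")
    case False
    then have "z q - int q \<le> z (Suc q) - int (Suc q)" using walk_step_ge[OF walk[of q]] by simp
    then show ?thesis using step by force
  qed (use step in auto)
qed simp

lemma displacement_le:
  assumes "t \<le> t'" and "t' \<le> t + n * (n - 1)"
  shows "(z t' - int t') - (z t - int t) \<le> int n - 2"
proof (rule ccontr)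
  let ?T = "t + n * (n - 1)"
  have n: "0 < n" using two_le_n by simp
  assume "\<not> ?thesis"
  then have rise: "z t - int t + (int n - 1) \<le> z t' - int t'" by simp
  have "level n c (z t) + int (n - 1) \<le> level n c (z t')"
    using potential_antimono[OF assms(1)] rise n unfolding potential_def by simp
  moreover have "level n c (z t') \<le> level n c (z ?T)" using level_mono[OF n] z_mono[OF assms(2)] .
  ultimately have level_t': "level n c (z t') = level n c (z ?T)" using level_periodic by simp
  have "z ?T - int ?T < z t' - int t'" using periodic[of t] rise two_le_n by simp
  then obtain p where p: "t' \<le> p" "p < ?T" "z (Suc p) = z p"
    using stay_if_displacement_drops assms(2) by blast
  have landing: "z (Suc p) mod int n = (c + 1) mod int n"
    using walk_step_stay walk[of p] p(3) by simp
  have "z t' \<le> z (Suc p)" "z (Suc p) \<le> z ?T" using z_mono p(1,2) by simp_all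
  then have "level n c (z t') = level n c (z (Suc p))"
    using level_mono[OF n] level_t' by (metis order_antisym)
  then have "z t' = z (Suc p)" using eq_if_level_eq[OF n landing] \<open>z t' \<le> z (Suc p)\<close> by blast
  moreover have "t < t'" using rise assms(1) two_le_n by (cases "t = t'") simp_all
  ultimately have "potential t' < potential t" using potential_strict landing by simp
  then show False using rise level_t' level_periodic n unfolding potential_def by simp
qed

end

lemma suffix_orbit_periodic_walk:
  assumes two_le_n: "2 \<le> n" and subword: "is_subword n u"
    and full: "word_prod (cyc_letter n u) 1 (int (n * (n - 1))) = id"
    and z: "\<And>s. z s = word_prod (cyc_letter n u) (b - int s + 1) b k + int s"
  shows "periodic_walk n (b - 1) z"
proof
  let ?f = "cyc_letter n u" and ?N = "int (n * (n - 1))"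
  show "2 \<le> n" by fact
  show "walk_step n (b - 1) (z t) (z (Suc t))" for t
  proof -
    let ?r = "(b - int t - 1) mod int n"
    have "walk_step n ?r (z t - int t) (?f (b - int t) (z t - int t) + 1)"
      using walk_step_adjacent_transp cyc_letter_cases[OF two_le_n subword] by simp
    moreover have "(b - 1) mod int n = (?r + int t) mod int n" by (simp add: mod_add_left_eq)
    ultimately have "walk_step n (b - 1) (z t) (?f (b - int t) (z t - int t) + 1 + int t)"
      using walk_step_shift by fastforce
    moreover have "z (Suc t) = ?f (b - int t) (z t - int t) + 1 + int t"
      using z word_prod_first[of "b - int t" b ?f] by simp
    ultimately show ?thesis by simp
  qed
  show "z (t + n * (n - 1)) = z t + ?N" for t
  proof -
    have N: "0 < ?N" using two_le_n by simp
    then have "word_prod ?f (b - int t - ?N + 1) (b - int t) = id"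
      using word_prod_rotation_id[OF N cyc_letter_periodic cyc_letter_involution[OF two_le_n subword] full,
          of "b - int t - ?N + 1"] by simp
    then have "word_prod ?f (b - int t - ?N + 1) b = word_prod ?f (b - int t + 1) b"
      using word_prod_split[of "b - int t - ?N + 1" "b - int t + 1" b ?f] N by simp
    moreover have "z (t + n * (n - 1)) = word_prod ?f (b - int t - ?N + 1) b k + (int t + ?N)"
      unfolding z of_nat_add by (simp add: diff_diff_eq)
    ultimately show ?thesis using z[of t] by simp
  qed
qed

theorem lemma5p12:
  fixes n :: nat and u :: "nat \<Rightarrow> int \<Rightarrow> int"
  assumes "n \<ge> 2"
    and "is_subword n u"
    and "word_prod (cyc_letter n u) 1 (int (n*(n-1))) = id"
  shows "\<forall>k a b :: int. 0 \<le> b - a \<and> b - a < int (n*(n-1)) \<longrightarrow>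
           \<bar>word_prod (cyc_letter n u) a b k - k\<bar> \<le> int n - 2"
proof (intro allI impI)
  fix k a b :: int
  assume ab: "0 \<le> b - a \<and> b - a < int (n*(n-1))"
  define z where "z s = word_prod (cyc_letter n u) (b - int s + 1) b k + int s" for s
  interpret periodic_walk n "b - 1" z
    using suffix_orbit_periodic_walk[OF assms] z_def by blast
  define L where "L = nat (b - a + 1)"
  have L: "L \<le> n * (n - 1)" "z L - int L = word_prod (cyc_letter n u) a b k"
    using ab by (simp_all add: L_def z_def nat_le_iff)
  have "z 0 = k" and "z (n * (n - 1)) - int (n * (n - 1)) = k"
    using periodic[of 0] by (simp_all add: z_def)
  then show "\<bar>word_prod (cyc_letter n u) a b k - k\<bar> \<le> int n - 2"
    using displacement_le[of 0 L] displacement_le[of L "n * (n - 1)"] L by simp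
qed

end
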